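(* Let $P\in\mathfrak N_2$ and let $(k,U,s,t)$ be a retractive up-split of $P$ with $S=s[P(0\to k)\setminus U]$ and $T=t[P(k+1\to h_P)]$. There exists a retraction $r$ of $P$ whose image is the induced subposet $S\cup T$, forming the ordinal sum $S\oplus T$, with $r(x)=s(x)$ for $x\in P(0\to k)\setminus U$, $r(x)\in T$ for $x\in U$, and $r(x)=t(x)$ for $x\in P(k+1\to h_P)$, if and only if $$S(h_S) < T(0) \quad\text{and}\quad \forall\, u\in U\ \exists\, v\in T(0):\ u\not< p\text{ for all }p\in t^{-1}(v).$$
   Context: All posets are finite. For a poset $P$ let $h_P$ be its height. The level sets are $P(0)=\min P$ and $P(k+1)=\min\big(P\setminus\bigcup_{i=0}^k P(i)\big)$. Write $P(k\to\ell)=\bigcup_{i=k}^{\ell}P(i)$ and identify subsets with induced subposets. For $A,B\subseteq P$, $A<B$ means $a<b$ for all $a\in A,b\in B$. A retraction of $P$ is an idempotent order-preserving map $r:P\to P$; its image is a retract. A 6-crown is $x_0<y_0>x_1<y_1>x_2<y_2>x_0$ with no other comparabilities. Type $3C$: three disjoint 2-element chains, no further comparabilities. A 4-crown stack is a poset $Q$ of height $\ge1$ all of whose consecutive level pairs $Q(i)\cup Q(i+1)$ are isomorphic to the ordinal sum of two 2-element antichains (an ordinal sum of 2-element antichains). A section of width three is a poset $P$ of height $h_P\ge1$ with carrier $\{c_{k,j}: k\in[0,h_P], j\in\{0,1,2\}\}$ such that: $c_{0,j}<\dots<c_{h_P,j}$ for each $j$; each $\{c_{k,0},c_{k,1},c_{k,2}\}$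 is an antichain; $c_{k,i}<c_{\ell,j}\Rightarrow c_{k,i+1}<c_{\ell,j+1}$ (indices mod 3); and no $P(k)\cup P(k+1)$ is the ordinal sum of two 3-antichains. It is nice if for all $x<y$: $\{z:z>x\}\not\subseteq\{z:z\ge y\}$ and $\{z:z<y\}\not\subseteq\{z:z\le x\}$. $\mathfrak N_2$ is the class of nice sections of width three with height $\ge2$ and horizon 2, i.e. $P(k)<P(\ell)$ whenever $\ell\ge k+2$, with 2 the smallest such integer. For $P\in\mathfrak N_2$, a retractive up-split is a quadruple $(k,U,s,t)$ with $k\in[0,h_P-1]$, $U\subset P(0\to k)$, $s:P(0\to k)\setminus U\to S$ a retraction and $t:P(k+1\to h_P)\to T$ a retraction, where $S,T$ are each a 2-element antichain or a 4-crown stack. $S(\cdot)$ and $T(\cdot)$ denote the level sets of $S$ and $T$. *)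

theory Defs
  imports Main
begin

definition lt :: "('a \<Rightarrow> 'a \<Rightarrow> bool) \<Rightarrow> 'a \<Rightarrow> 'a \<Rightarrow> bool" where
  "lt le x y \<longleftrightarrow> le x y \<and> x \<noteq> y"

definition partial_order_on_set :: "'a set \<Rightarrow> ('a \<Rightarrow> 'a \<Rightarrow> bool) \<Rightarrow> bool" where
  "partial_order_on_set A le \<longleftrightarrow>
     (\<forall>x\<in>A. le x x) \<and>
     (\<forall>x\<in>A. \<forall>y\<in>A. le x y \<and> le y x \<longrightarrow> x = y) \<and>
     (\<forall>x\<in>A. \<forall>y\<in>A. \<forall>z\<in>A. le x y \<and> le y z \<longrightarrow> le x z)"

definition mins :: "'a set \<Rightarrow> ('a \<Rightarrow> 'a \<Rightarrow> bool) \<Rightarrow> 'a set" where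
  "mins A le = {x\<in>A. \<not> (\<exists>y\<in>A. lt le y x)}"

fun rest :: "'a set \<Rightarrow> ('a \<Rightarrow> 'a \<Rightarrow> bool) \<Rightarrow> nat \<Rightarrow> 'a set" where
  "rest A le 0 = A"
| "rest A le (Suc k) = rest A le k - mins (rest A le k) le"

definition level :: "'a set \<Rightarrow> ('a \<Rightarrow> 'a \<Rightarrow> bool) \<Rightarrow> nat \<Rightarrow> 'a set" where
  "level A le k = mins (rest A le k) le"

definition levels_between :: "'a set \<Rightarrow> ('a \<Rightarrow> 'a \<Rightarrow> bool) \<Rightarrow> nat \<Rightarrow> nat \<Rightarrow> 'a set" where
  "levels_between A le a b = (\<Union>i\<in>{a..b}. level A le i)"

definition is_chain :: "'a set \<Rightarrow> ('a \<Rightarrow> 'a \<Rightarrow> bool) \<Rightarrow> 'a set \<Rightarrow> bool" where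
  "is_chain A le C \<longleftrightarrow> C \<subseteq> A \<and> (\<forall>x\<in>C. \<forall>y\<in>C. le x y \<or> le y x)"

definition height :: "'a set \<Rightarrow> ('a \<Rightarrow> 'a \<Rightarrow> bool) \<Rightarrow> nat" where
  "height A le = Max {card C - 1 | C. is_chain A le C \<and> C \<noteq> {}}"

definition antichain :: "('a \<Rightarrow> 'a \<Rightarrow> bool) \<Rightarrow> 'a set \<Rightarrow> bool" where
  "antichain le X \<longleftrightarrow> (\<forall>x\<in>X. \<forall>y\<in>X. le x y \<longrightarrow> x = y)"

definition set_less :: "('a \<Rightarrow> 'a \<Rightarrow> bool) \<Rightarrow> 'a set \<Rightarrow> 'a set \<Rightarrow> bool" where
  "set_less le X Y \<longleftrightarrow> (\<forall>x\<in>X. \<forall>y\<in>Y. lt le x y)"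

definition ordsum_two_antichains :: "('a \<Rightarrow> 'a \<Rightarrow> bool) \<Rightarrow> 'a set \<Rightarrow> nat \<Rightarrow> bool" where
  "ordsum_two_antichains le B n \<longleftrightarrow>
     (\<exists>X Y. B = X \<union> Y \<and> X \<inter> Y = {} \<and> card X = n \<and> card Y = n \<and>
            antichain le X \<and> antichain le Y \<and> set_less le X Y)"

definition retraction :: "'a set \<Rightarrow> ('a \<Rightarrow> 'a \<Rightarrow> bool) \<Rightarrow> ('a \<Rightarrow> 'a) \<Rightarrow> bool" where
  "retraction X le r \<longleftrightarrow>
     (\<forall>x\<in>X. r x \<in> X) \<and> (\<forall>x\<in>X. r (r x) = r x) \<and>
     (\<forall>x\<in>X. \<forall>y\<in>X. le x y \<longrightarrow> le (r x) (r y))"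

definition two_antichain :: "('a \<Rightarrow> 'a \<Rightarrow> bool) \<Rightarrow> 'a set \<Rightarrow> bool" where
  "two_antichain le S \<longleftrightarrow> card S = 2 \<and> antichain le S"

definition crown4_stack :: "('a \<Rightarrow> 'a \<Rightarrow> bool) \<Rightarrow> 'a set \<Rightarrow> bool" where
  "crown4_stack le Q \<longleftrightarrow> finite Q \<and> Q \<noteq> {} \<and> height Q le \<ge> 1 \<and>
     (\<forall>i < height Q le. ordsum_two_antichains le (level Q le i \<union> level Q le (Suc i)) 2)"

text \<open>Carrier {c_{k,j} : k in [0,h], j in {0,1,2}}, with c_{k,j} represented as (k,j).\<close>
definition carrier3 :: "nat \<Rightarrow> (nat \<times> nat) set" where
  "carrier3 h = {(k, j). k \<le> h \<and> j < 3}"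

definition section3 :: "nat \<Rightarrow> (nat \<times> nat \<Rightarrow> nat \<times> nat \<Rightarrow> bool) \<Rightarrow> bool" where
  "section3 h le \<longleftrightarrow>
     partial_order_on_set (carrier3 h) le \<and>
     h \<ge> 1 \<and> height (carrier3 h) le = h \<and>
     (\<forall>k < h. \<forall>j < 3. lt le (k, j) (Suc k, j)) \<and>
     (\<forall>k \<le> h. antichain le {(k, 0), (k, 1), (k, 2)}) \<and>
     (\<forall>k \<le> h. \<forall>l \<le> h. \<forall>i < 3. \<forall>j < 3.
        lt le (k, i) (l, j) \<longrightarrow> lt le (k, (i + 1) mod 3) (l, (j + 1) mod 3)) \<and>
     (\<forall>k. \<not> ordsum_two_antichains le
              (level (carrier3 h) le k \<union> level (carrier3 h) le (Suc k)) 3)"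

definition nice :: "'a set \<Rightarrow> ('a \<Rightarrow> 'a \<Rightarrow> bool) \<Rightarrow> bool" where
  "nice A le \<longleftrightarrow>
     (\<forall>x\<in>A. \<forall>y\<in>A. lt le x y \<longrightarrow>
        \<not> ({z\<in>A. lt le x z} \<subseteq> {z\<in>A. le y z}) \<and>
        \<not> ({z\<in>A. lt le z y} \<subseteq> {z\<in>A. le z x}))"

definition has_horizon :: "'a set \<Rightarrow> ('a \<Rightarrow> 'a \<Rightarrow> bool) \<Rightarrow> nat \<Rightarrow> bool" where
  "has_horizon A le n \<longleftrightarrow>
     (\<forall>k l. k + n \<le> l \<longrightarrow> set_less le (level A le k) (level A le l))"

definition horizon :: "'a set \<Rightarrow> ('a \<Rightarrow> 'a \<Rightarrow> bool) \<Rightarrow> nat" where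
  "horizon A le = (LEAST n. has_horizon A le n)"

definition N2 :: "nat \<Rightarrow> (nat \<times> nat \<Rightarrow> nat \<times> nat \<Rightarrow> bool) \<Rightarrow> bool" where
  "N2 h le \<longleftrightarrow> section3 h le \<and> nice (carrier3 h) le \<and> h \<ge> 2 \<and>
     horizon (carrier3 h) le = 2"

definition retractive_up_split ::
  "nat \<Rightarrow> (nat \<times> nat \<Rightarrow> nat \<times> nat \<Rightarrow> bool) \<Rightarrow> nat \<Rightarrow> (nat \<times> nat) set
    \<Rightarrow> (nat \<times> nat \<Rightarrow> nat \<times> nat) \<Rightarrow> (nat \<times> nat \<Rightarrow> nat \<times> nat) \<Rightarrow> bool" where
  "retractive_up_split h le k U s t \<longleftrightarrow>
     (let P = carrier3 h;
          D = levels_between P le 0 k - U;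
          E = levels_between P le (Suc k) h;
          S = s ` D; T = t ` E
      in k \<le> h - 1 \<and> U \<subseteq> levels_between P le 0 k \<and>
         retraction D le s \<and> retraction E le t \<and>
         (two_antichain le S \<or> crown4_stack le S) \<and>
         (two_antichain le T \<or> crown4_stack le T))"

end

theory Submission
  imports Defs
begin

text \<open>
  A retraction r of the required kind equals s on P(0 -> k) minus U and t on P(k+1 -> h_P), and
  must send each u \<in> U to some r(u) \<in> T below every t(p) with u < p. Since S and T are stacks of
  levels, each level lying below the next, S < T amounts to S(h_S) < T(0). The two elements of
  T(0) lie below every other element of T, so a suitable r(u) exists iff some v \<in> T(0) is missed
  by all t(p) with u < p (the other element of T(0) then works); conversely, the element of T(0)
  other than r(u) is such a v, because T(0) consists of minimal elements. Horizon 2 forces U into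
  the single level P(k), as a point of U on a lower level would lie below v = t(v). Hence no point
  of U lies below a point of P(0 -> k), and the glued map is monotone.
\<close>

section \<open>Levels of a finite poset\<close>

lemma partial_order_on_set_refl: "partial_order_on_set A le \<Longrightarrow> x \<in> A \<Longrightarrow> le x x"
  unfolding partial_order_on_set_def by blast

lemma partial_order_on_set_antisym:
  "partial_order_on_set A le \<Longrightarrow> x \<in> A \<Longrightarrow> y \<in> A \<Longrightarrow> le x y \<Longrightarrow> le y x \<Longrightarrow> x = y"
  unfolding partial_order_on_set_def by blast

lemma partial_order_on_set_trans:
  "partial_order_on_set A le \<Longrightarrow> x \<in> A \<Longrightarrow> y \<in> A \<Longrightarrow> z \<in> A \<Longrightarrow> le x y \<Longrightarrow> le y z \<Longrightarrow> le x z"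
  unfolding partial_order_on_set_def by blast

lemma partial_order_on_subset:
  "partial_order_on_set A le \<Longrightarrow> B \<subseteq> A \<Longrightarrow> partial_order_on_set B le"
  unfolding partial_order_on_set_def by blast

lemma le_lt_le_trans:
  assumes "partial_order_on_set A le" "x \<in> A" "y \<in> A" "z \<in> A" "w \<in> A"
    and "le x y" "lt le y z" "le z w"
  shows "lt le x w"
proof -
  have "le x w" using assms partial_order_on_set_trans[OF assms(1)] unfolding lt_def by meson
  moreover have "x \<noteq> w"
  proof
    assume "x = w"
    then have "le z y" using assms partial_order_on_set_trans[OF assms(1)] by blast
    then show False using assms partial_order_on_set_antisym[OF assms(1)] unfolding lt_def by blast
  qed
  ultimately show ?thesis unfolding lt_def by blast
qed

lemma lt_trans:
  assumes "partial_order_on_set A le" "x \<in> A" "y \<in> A" "z \<in> A" "lt le x y" "lt le y z"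
  shows "lt le x z"
  using le_lt_le_trans[OF assms(1-4) assms(4) _ assms(6) partial_order_on_set_refl[OF assms(1,4)]]
    assms(5)
  unfolding lt_def by blast

lemma rest_subset: "rest A le n \<subseteq> A"
  by (induct n) auto

lemma rest_antimono: "m \<le> n \<Longrightarrow> rest A le n \<subseteq> rest A le m"
  by (rule lift_Suc_antimono_le[of "rest A le"]) auto

lemma level_subset_rest: "level A le n \<subseteq> rest A le n"
  unfolding level_def mins_def by auto

lemma level_subset: "level A le n \<subseteq> A"
  using level_subset_rest rest_subset by (rule subset_trans)

lemma level_index_less:
  assumes "x \<in> level A le i" "y \<in> level A le j" "lt le x y"
  shows "i < j"
proof (rule ccontr)
  assume "\<not> i < j"
  then have "x \<in> rest A le j"
    using assms(1) level_subset_rest[of A le i] rest_antimono[of j i A le] by auto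
  with assms(2,3) show False unfolding level_def mins_def by blast
qed

lemma level_index_unique:
  assumes "x \<in> level A le i" "x \<in> level A le j"
  shows "i = j"
proof -
  have "x \<notin> level A le m" if "m < n" "x \<in> level A le n" for m n
    using that level_subset_rest[of A le n] rest_antimono[of "Suc m" n A le]
    by (auto simp: level_def)
  then show ?thesis using assms by (cases i j rule: linorder_cases) auto
qed

lemma mins_nonempty:
  assumes "partial_order_on_set A le" "B \<subseteq> A" "finite B" "B \<noteq> {}"
  shows "mins B le \<noteq> {}"
proof -
  define below where "below x = card {y\<in>B. lt le y x}" for x
  obtain x where x: "x \<in> B" and least: "\<And>y. y \<in> B \<Longrightarrow> below x \<le> below y"
    using assms(4) ex_has_least_nat[of "\<lambda>x. x \<in> B" _ below] by blast
  have "x \<in> mins B le"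
  proof (unfold mins_def, safe intro!: x)
    fix y assume y: "y \<in> B" "lt le y x"
    have "{z\<in>B. lt le z y} \<subset> {z\<in>B. lt le z x}"
      using lt_trans[OF assms(1)] y x assms(2) by (auto simp: lt_def)
    then have "below y < below x"
      unfolding below_def by (rule psubset_card_mono[rotated]) (use assms(3) in simp)
    with least[OF y(1)] show False by simp
  qed
  then show ?thesis by blast
qed

lemma level_Suc_has_lower:
  assumes "y \<in> level A le (Suc n)"
  shows "\<exists>z\<in>level A le n. lt le z y"
proof -
  have "y \<in> rest A le n" "y \<notin> level A le n"
    using assms level_subset_rest[of A le "Suc n"] by (auto simp: level_def)
  then obtain z where z: "z \<in> rest A le n" "lt le z y" unfolding level_def mins_def by blast
  show ?thesis
  proof (cases "z \<in> level A le n")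
    case False
    then have "z \<in> rest A le (Suc n)" using z(1) by (simp add: level_def)
    with assms z(2) show ?thesis unfolding level_def mins_def by auto
  qed (use z in blast)
qed

lemma exists_chain_below_level:
  assumes "partial_order_on_set A le" "y \<in> level A le n"
  shows "\<exists>C. is_chain A le C \<and> card C = Suc n \<and> (\<forall>c\<in>C. le c y)"
  using assms(2)
proof (induction n arbitrary: y)
  case 0
  then have "y \<in> A" using level_subset[of A le 0] by blast
  then show ?case
    using partial_order_on_set_refl[OF assms(1)] unfolding is_chain_def
    by (intro exI[of _ "{y}"]) auto
next
  case (Suc n)
  obtain z where z: "z \<in> level A le n" "lt le z y" using level_Suc_has_lower[OF Suc.prems] by blast
  obtain C where C: "is_chain A le C" "card C = Suc n" "\<forall>c\<in>C. le c z"
    using Suc.IH[OF z(1)] by blast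
  have A: "y \<in> A" "z \<in> A" "C \<subseteq> A"
    using Suc.prems z(1) C(1) level_subset[of A le] unfolding is_chain_def by blast+
  have below_y: "\<forall>c\<in>C. le c y"
  proof
    fix c assume "c \<in> C"
    then show "le c y"
      using partial_order_on_set_trans[OF assms(1), of c z y] C(3) z(2) A unfolding lt_def by blast
  qed
  have "y \<notin> C"
  proof
    assume "y \<in> C"
    then show False
      using partial_order_on_set_antisym[OF assms(1), of y z] C(3) z(2) A unfolding lt_def by blast
  qed
  moreover have "finite C" using C(2) card.infinite by fastforce
  ultimately show ?case
    using C below_y A partial_order_on_set_refl[OF assms(1)] unfolding is_chain_def
    by (intro exI[of _ "insert y C"]) auto
qed

lemma level_nonempty_imp_le_height:
  assumes "finite A" "partial_order_on_set A le" "level A le n \<noteq> {}"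
  shows "n \<le> height A le"
proof -
  obtain C where C: "is_chain A le C" "card C = Suc n"
    using assms(3) exists_chain_below_level[OF assms(2)] by blast
  have "finite {card C - 1 | C. is_chain A le C \<and> C \<noteq> {}}"
    by (rule finite_subset[of _ "(\<lambda>C. card C - 1) ` Pow A"])
      (use assms(1) in \<open>auto simp: is_chain_def\<close>)
  moreover have "n \<in> {card C - 1 | C. is_chain A le C \<and> C \<noteq> {}}"
    using C by force
  ultimately show ?thesis unfolding height_def by simp
qed

lemma rest_empty_above_height:
  assumes "finite A" "partial_order_on_set A le" "height A le < m"
  shows "rest A le m = {}"
proof -
  have "level A le m = {}"
    using level_nonempty_imp_le_height[OF assms(1,2), of m] assms(3) by linarith
  then show ?thesis
    using mins_nonempty[OF assms(2) rest_subset finite_subset[OF rest_subset assms(1)]]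
    unfolding level_def by blast
qed

lemma level_empty_above_height:
  assumes "finite A" "partial_order_on_set A le" "height A le < m"
  shows "level A le m = {}"
  using rest_empty_above_height[OF assms] level_subset_rest[of A le m] by blast

lemma not_in_rest_imp_in_level: "x \<in> A \<Longrightarrow> x \<notin> rest A le n \<Longrightarrow> \<exists>m<n. x \<in> level A le m"
proof (induction n)
  case (Suc n)
  then show ?case by (cases "x \<in> rest A le n") (auto simp: level_def less_Suc_eq)
qed simp

lemma in_some_level:
  assumes "finite A" "partial_order_on_set A le" "x \<in> A"
  shows "\<exists>i \<le> height A le. x \<in> level A le i"
proof -
  have "x \<notin> rest A le (Suc (height A le))"
    using rest_empty_above_height[OF assms(1,2)] by blast
  then show ?thesis using not_in_rest_imp_in_level[OF assms(3)] less_Suc_eq_le by blast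
qed

lemma levels_between_iff:
  "x \<in> levels_between A le a b \<longleftrightarrow> (\<exists>i. a \<le> i \<and> i \<le> b \<and> x \<in> level A le i)"
  unfolding levels_between_def by auto

lemma levels_betweenE:
  assumes "x \<in> levels_between A le a b"
  obtains i where "a \<le> i" "i \<le> b" "x \<in> level A le i"
  using assms unfolding levels_between_iff by blast

lemma levels_between_subset: "levels_between A le a b \<subseteq> A"
  unfolding levels_between_def using level_subset[of A le] by blast

lemma has_horizon_horizon:
  assumes "finite A" "partial_order_on_set A le"
  shows "has_horizon A le (horizon A le)"
proof -
  have "has_horizon A le (Suc (height A le))"
    using level_empty_above_height[OF assms] unfolding has_horizon_def set_less_def by simp
  then show ?thesis unfolding horizon_def by (rule LeastI)
qed

section \<open>Two-element antichains and 4-crown stacks\<close>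

lemma level_0_antichain: "antichain le Q \<Longrightarrow> level Q le 0 = Q"
  unfolding level_def mins_def lt_def antichain_def by auto

lemma height_antichain:
  assumes "antichain le Q" "partial_order_on_set Q le" "Q \<noteq> {}"
  shows "height Q le = 0"
proof -
  have "C = {c}" if "is_chain Q le C" "c \<in> C" for C c
    using that assms(1) unfolding is_chain_def antichain_def by blast
  then have "{card C - 1 | C. is_chain Q le C \<and> C \<noteq> {}} \<subseteq> {0}" by fastforce
  moreover obtain q where "q \<in> Q" using assms(3) by blast
  then have "is_chain Q le {q}"
    using partial_order_on_set_refl[OF assms(2)] unfolding is_chain_def by auto
  then have "0 \<in> {card C - 1 | C. is_chain Q le C \<and> C \<noteq> {}}" by force
  ultimately have "{card C - 1 | C. is_chain Q le C \<and> C \<noteq> {}} = {0}" by blast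
  then show ?thesis unfolding height_def by simp
qed

lemma crown4_stack_consecutive_levels:
  assumes "crown4_stack le Q" "i < height Q le"
  shows "set_less le (level Q le i) (level Q le (Suc i))"
    and "card (level Q le i) = 2" "card (level Q le (Suc i)) = 2"
proof -
  obtain X Y where XY: "level Q le i \<union> level Q le (Suc i) = X \<union> Y" "card X = 2" "card Y = 2"
    "set_less le X Y"
    using assms unfolding crown4_stack_def ordsum_two_antichains_def by blast
  obtain x y where "x \<in> X" "y \<in> Y" using XY(2,3) unfolding card_2_iff by blast
  have "X \<subseteq> level Q le i"
  proof
    fix x' assume "x' \<in> X"
    then have "lt le x' y" using XY(4) \<open>y \<in> Y\<close> unfolding set_less_def by blast
    moreover have "x' \<in> level Q le i \<union> level Q le (Suc i)" "y \<in> level Q le i \<union> level Q le (Suc i)"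
      using XY(1) \<open>x' \<in> X\<close> \<open>y \<in> Y\<close> by blast+
    ultimately show "x' \<in> level Q le i"
      using level_index_less[of x' Q le "Suc i" y i] level_index_less[of x' Q le "Suc i" y "Suc i"]
      by auto
  qed
  moreover have "Y \<subseteq> level Q le (Suc i)"
  proof
    fix y' assume "y' \<in> Y"
    then have "lt le x y'" using XY(4) \<open>x \<in> X\<close> unfolding set_less_def by blast
    moreover have "x \<in> level Q le i \<union> level Q le (Suc i)" "y' \<in> level Q le i \<union> level Q le (Suc i)"
      using XY(1) \<open>x \<in> X\<close> \<open>y' \<in> Y\<close> by blast+
    ultimately show "y' \<in> level Q le (Suc i)"
      using level_index_less[of x Q le i y' i] level_index_less[of x Q le "Suc i" y' i]
      by auto
  qed
  moreover have "level Q le i \<inter> level Q le (Suc i) = {}"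
    by (auto dest: level_index_unique)
  ultimately have "level Q le i = X" "level Q le (Suc i) = Y" using XY(1) by blast+
  then show "set_less le (level Q le i) (level Q le (Suc i))"
    and "card (level Q le i) = 2" "card (level Q le (Suc i)) = 2"
    using XY(2-4) by simp_all
qed

lemma crown4_stack_levels_less:
  assumes "crown4_stack le Q" "partial_order_on_set Q le" "i < j" "j \<le> height Q le"
  shows "set_less le (level Q le i) (level Q le j)"
  using assms(3,4)
proof (induction j)
  case (Suc j)
  then have "j < height Q le" by simp
  note step = crown4_stack_consecutive_levels[OF assms(1) this]
  show ?case
  proof (cases "i = j")
    case False
    then have below: "set_less le (level Q le i) (level Q le j)" using Suc by simp
    obtain z where z: "z \<in> level Q le j" using step(2) by fastforce
    show ?thesis unfolding set_less_def
    proof (intro ballI)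
      fix x y assume "x \<in> level Q le i" "y \<in> level Q le (Suc j)"
      then show "lt le x y"
        using lt_trans[OF assms(2), of x z y] below step(1) z level_subset[of Q le]
        unfolding set_less_def by blast
    qed
  qed (use step in simp)
qed simp

lemma finite_if_two_antichain_or_crown4_stack:
  "two_antichain le Q \<or> crown4_stack le Q \<Longrightarrow> finite Q"
  unfolding two_antichain_def crown4_stack_def using card.infinite by force

lemma card_level_0_eq_2:
  assumes "two_antichain le Q \<or> crown4_stack le Q"
  shows "card (level Q le 0) = 2"
  using assms level_0_antichain crown4_stack_consecutive_levels(2)[of le Q 0]
  unfolding two_antichain_def crown4_stack_def by fastforce

lemma level_0_less:
  assumes "two_antichain le Q \<or> crown4_stack le Q" "partial_order_on_set Q le"
    and "x \<in> Q" "x \<notin> level Q le 0" "b \<in> level Q le 0"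
  shows "lt le b x"
proof -
  have "crown4_stack le Q"
    using assms(1,3,4) level_0_antichain unfolding two_antichain_def by blast
  moreover obtain i where "i \<le> height Q le" "x \<in> level Q le i"
    using in_some_level[OF finite_if_two_antichain_or_crown4_stack[OF assms(1)] assms(2,3)] by blast
  moreover have "0 < i" using assms(4) \<open>x \<in> level Q le i\<close> by (cases i) auto
  ultimately show ?thesis
    using crown4_stack_levels_less[OF _ assms(2), of 0 i] assms(5) unfolding set_less_def by blast
qed

lemma exists_level_0_le:
  assumes "two_antichain le Q \<or> crown4_stack le Q" "partial_order_on_set Q le" "x \<in> Q"
  shows "\<exists>b\<in>level Q le 0. le b x"
proof (cases "x \<in> level Q le 0")
  case True
  then show ?thesis using partial_order_on_set_refl[OF assms(2,3)] by blast
next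
  case False
  have "level Q le 0 \<noteq> {}" using card_level_0_eq_2[OF assms(1)] by auto
  then obtain b where "b \<in> level Q le 0" by blast
  then show ?thesis using level_0_less[OF assms False] unfolding lt_def by blast
qed

lemma exists_top_level_ge:
  assumes "two_antichain le Q \<or> crown4_stack le Q" "partial_order_on_set Q le" "x \<in> Q"
  shows "\<exists>a\<in>level Q le (height Q le). le x a"
proof (cases "x \<in> level Q le (height Q le)")
  case True
  then show ?thesis using partial_order_on_set_refl[OF assms(2,3)] by blast
next
  case False
  have "\<not> two_antichain le Q"
  proof
    assume "two_antichain le Q"
    then have "antichain le Q" "Q \<noteq> {}" using assms(3) unfolding two_antichain_def by auto
    then have "height Q le = 0" "level Q le 0 = Q"
      using height_antichain[OF _ assms(2)] level_0_antichain by auto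
    with False assms(3) show False by simp
  qed
  with assms(1) have crown: "crown4_stack le Q" by blast
  then have "0 < height Q le" unfolding crown4_stack_def by simp
  then have "card (level Q le (height Q le)) = 2"
    using crown4_stack_consecutive_levels(3)[OF crown, of "height Q le - 1"] by simp
  then obtain a where a: "a \<in> level Q le (height Q le)" by fastforce
  obtain i where i: "i \<le> height Q le" "x \<in> level Q le i"
    using in_some_level[OF finite_if_two_antichain_or_crown4_stack[OF assms(1)] assms(2,3)] by blast
  with False have "i < height Q le" by (cases "i = height Q le") auto
  then have "set_less le (level Q le i) (level Q le (height Q le))"
    using crown4_stack_levels_less[OF crown assms(2)] by blast
  then show ?thesis using a i(2) unfolding set_less_def lt_def by blast
qed

lemma set_less_if_extreme_levels_less:
  assumes "partial_order_on_set A le" "S \<subseteq> A" "T \<subseteq> A"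
    and "two_antichain le S \<or> crown4_stack le S" "two_antichain le T \<or> crown4_stack le T"
    and "set_less le (level S le (height S le)) (level T le 0)"
  shows "set_less le S T"
  unfolding set_less_def
proof (intro ballI)
  fix x y assume "x \<in> S" "y \<in> T"
  obtain a where a: "a \<in> level S le (height S le)" "le x a"
    using exists_top_level_ge[OF assms(4) partial_order_on_subset[OF assms(1,2)] \<open>x \<in> S\<close>] by blast
  obtain b where b: "b \<in> level T le 0" "le b y"
    using exists_level_0_le[OF assms(5) partial_order_on_subset[OF assms(1,3)] \<open>y \<in> T\<close>] by blast
  have "a \<in> A" "b \<in> A"
    using a(1) b(1) assms(2,3) level_subset[of S le "height S le"] level_subset[of T le 0] by blast+
  then show "lt le x y"
    using le_lt_le_trans[OF assms(1), of x a b y] a b assms(2,3,6) \<open>x \<in> S\<close> \<open>y \<in> T\<close>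
    unfolding set_less_def by blast
qed

lemma other_level_0_element:
  assumes "two_antichain le Q \<or> crown4_stack le Q" "partial_order_on_set Q le"
    and "v \<in> level Q le 0"
  shows "\<exists>w\<in>level Q le 0. w \<noteq> v \<and> (\<forall>z\<in>Q. z \<noteq> v \<longrightarrow> le w z)"
proof -
  obtain x y where "level Q le 0 = {x, y}" "x \<noteq> y"
    using card_level_0_eq_2[OF assms(1)] unfolding card_2_iff by blast
  then obtain w where w: "level Q le 0 = {v, w}" "w \<noteq> v"
    using assms(3) by (cases "v = x") auto
  have "le w z" if "z \<in> Q" "z \<noteq> v" for z
  proof (cases "z \<in> level Q le 0")
    case True
    then show ?thesis using that w partial_order_on_set_refl[OF assms(2)] by blast
  next
    case False
    then show ?thesis
      using level_0_less[OF assms(1,2) that(1) False, of w] w(1) unfolding lt_def by blast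
  qed
  then show ?thesis using w by blast
qed

section \<open>Gluing retractions along a split\<close>

lemma retraction_glue:
  assumes po: "partial_order_on_set P le"
    and partition: "P = D \<union> U \<union> E" "D \<inter> U = {}" "(D \<union> U) \<inter> E = {}"
    and s: "retraction D le s" and t: "retraction E le t"
    and below: "set_less le (s ` D) (t ` E)"
    and w_in: "\<forall>x\<in>U. w x \<in> t ` E"
    and w_below: "\<forall>x\<in>U. \<forall>y\<in>E. lt le x y \<longrightarrow> le (w x) (t y)"
    and upward: "\<forall>x\<in>U \<union> E. \<forall>y\<in>D \<union> U. \<not> lt le x y"
  shows "\<exists>r. retraction P le r \<and> r ` P = s ` D \<union> t ` E \<and>
           (\<forall>x\<in>D. r x = s x) \<and> (\<forall>x\<in>U. r x = w x) \<and> (\<forall>x\<in>E. r x = t x)"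
proof -
  define r where "r x = (if x \<in> D then s x else if x \<in> E then t x else w x)" for x
  have rD: "\<forall>x\<in>D. r x = s x" and rU: "\<forall>x\<in>U. r x = w x" and rE: "\<forall>x\<in>E. r x = t x"
    using partition unfolding r_def by auto
  have images: "s ` D \<subseteq> D" "t ` E \<subseteq> E"
    using s t unfolding retraction_def by auto
  have r_values: "r x \<in> s ` D \<union> t ` E" if "x \<in> P" for x
    using that partition(1) rD rU rE w_in by auto
  have r_fixes: "r z = z" if "z \<in> s ` D \<union> t ` E" for z
    using that images rD rE s t unfolding retraction_def by auto
  have r_mono: "le (r x) (r y)" if x: "x \<in> P" and y: "y \<in> P" and xy: "lt le x y" for x y
  proof -
    have across: "le (r x) (r y)" if "x \<in> D" "y \<in> U \<union> E"
    proof -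
      have "r y \<in> t ` E" using that(2) rU rE w_in by auto
      then show ?thesis using below rD that(1) unfolding set_less_def lt_def by auto
    qed
    consider "x \<in> D" "y \<in> D" | "x \<in> D" "y \<in> U \<union> E" | "x \<in> U" "y \<in> E" | "x \<in> E" "y \<in> E"
      | "x \<in> U \<union> E" "y \<in> D \<union> U"
      using x y partition(1) by blast
    then show ?thesis
    proof cases
      case 1
      then show ?thesis using s xy rD unfolding retraction_def lt_def by simp
    next
      case 2
      then show ?thesis by (rule across)
    next
      case 3
      then show ?thesis using w_below xy rU rE by simp
    next
      case 4
      then show ?thesis using t xy rE unfolding retraction_def lt_def by simp
    next
      case 5
      then show ?thesis using upward xy by blast
    qed
  qed
  have retract_P: "s ` D \<union> t ` E \<subseteq> P"
    using images partition(1) by blast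
  have "retraction P le r"
    unfolding retraction_def
  proof (intro conjI ballI impI)
    fix x assume "x \<in> P"
    then show "r x \<in> P" and "r (r x) = r x"
      using r_values[of x] r_fixes[of "r x"] retract_P by blast+
  next
    fix x y assume x: "x \<in> P" and y: "y \<in> P" and "le x y"
    show "le (r x) (r y)"
    proof (cases "x = y")
      case True
      then show ?thesis using partial_order_on_set_refl[OF po] r_values[OF x] retract_P by blast
    next
      case False
      then show ?thesis using r_mono[OF x y] \<open>le x y\<close> by (simp add: lt_def)
    qed
  qed
  moreover have "r ` P = s ` D \<union> t ` E"
  proof
    show "r ` P \<subseteq> s ` D \<union> t ` E" using r_values by blast
    show "s ` D \<union> t ` E \<subseteq> r ` P"
    proof
      fix z assume z: "z \<in> s ` D \<union> t ` E"
      then have "z = r z" "z \<in> P" using r_fixes retract_P by auto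
      then show "z \<in> r ` P" by blast
    qed
  qed
  ultimately show ?thesis using rD rU rE by blast
qed

section \<open>Retractive up-splits\<close>

locale up_split =
  fixes P :: "'a set" and le :: "'a \<Rightarrow> 'a \<Rightarrow> bool" and h k :: nat
    and U :: "'a set" and s t :: "'a \<Rightarrow> 'a"
  assumes finite_P: "finite P" and po: "partial_order_on_set P le"
    and height_P: "height P le = h"
    and U_low: "U \<subseteq> levels_between P le 0 k"
    and retraction_s: "retraction (levels_between P le 0 k - U) le s"
    and retraction_t: "retraction (levels_between P le (Suc k) h) le t"
    and shape_S: "two_antichain le (s ` (levels_between P le 0 k - U)) \<or>
                  crown4_stack le (s ` (levels_between P le 0 k - U))"
    and shape_T: "two_antichain le (t ` levels_between P le (Suc k) h) \<or>
                  crown4_stack le (t ` levels_between P le (Suc k) h)"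
begin

abbreviation "D \<equiv> levels_between P le 0 k - U"
abbreviation "E \<equiv> levels_between P le (Suc k) h"
abbreviation "S \<equiv> s ` D"
abbreviation "T \<equiv> t ` E"

lemma image_s_subset: "S \<subseteq> D" and image_t_subset: "T \<subseteq> E"
  using retraction_s retraction_t unfolding retraction_def by auto

lemma t_fixes_image: "v \<in> T \<Longrightarrow> t v = v"
  using retraction_t unfolding retraction_def by auto

lemma E_subset: "E \<subseteq> P"
  by (rule levels_between_subset)

lemma U_subset: "U \<subseteq> P"
  using U_low levels_between_subset by (rule subset_trans)

lemma S_subset: "S \<subseteq> P"
  using image_s_subset levels_between_subset[of P le 0 k] by blast

lemma T_subset: "T \<subseteq> P"
  using image_t_subset E_subset by (rule subset_trans)

lemma partial_order_T: "partial_order_on_set T le"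
  using po T_subset by (rule partial_order_on_subset)

lemma P_partition: "P = D \<union> U \<union> E" and lower_upper_disjoint: "(D \<union> U) \<inter> E = {}"
proof -
  have "x \<in> D \<union> U \<union> E" if x: "x \<in> P" for x
  proof -
    obtain i where "i \<le> h" "x \<in> level P le i"
      using in_some_level[OF finite_P po x] height_P by blast
    then show ?thesis by (cases "i \<le> k") (auto simp: levels_between_iff)
  qed
  then show "P = D \<union> U \<union> E"
    using U_low levels_between_subset[of P le] by blast
  have "x \<notin> E" if low: "x \<in> levels_between P le 0 k" for x
  proof
    assume "x \<in> E"
    then obtain j where "Suc k \<le> j" "x \<in> level P le j" by (auto simp: levels_between_iff)
    moreover obtain i where "i \<le> k" "x \<in> level P le i"
      using low by (auto elim: levels_betweenE)
    ultimately show False using level_index_unique[of x P le i j] by simp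
  qed
  then show "(D \<union> U) \<inter> E = {}" using U_low by blast
qed

lemma not_less_from_upper:
  assumes "U \<subseteq> level P le k" "x \<in> U \<union> E" "y \<in> D \<union> U"
  shows "\<not> lt le x y"
proof
  assume "lt le x y"
  obtain i where i: "k \<le> i" "x \<in> level P le i"
  proof (cases "x \<in> U")
    case False
    then show ?thesis using assms(2) that by (auto elim: levels_betweenE dest: Suc_leD)
  qed (use assms(1) that in blast)
  obtain j where j: "j \<le> k" "y \<in> level P le j"
    using assms(3) U_low by (auto elim: levels_betweenE)
  have "i < j" using level_index_less[OF i(2) j(2) \<open>lt le x y\<close>] .
  with i(1) j(1) show False by simp
qed

lemma U_subset_level_k:
  assumes "has_horizon P le 2"
    and "\<forall>u\<in>U. \<exists>v\<in>level T le 0. \<forall>p\<in>E. t p = v \<longrightarrow> \<not> lt le u p"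
  shows "U \<subseteq> level P le k"
proof
  fix u assume "u \<in> U"
  then obtain v where v: "v \<in> level T le 0" "\<forall>p\<in>E. t p = v \<longrightarrow> \<not> lt le u p"
    using assms(2) by blast
  then have "v \<in> T" using level_subset[of "T" le 0] by blast
  then have "v \<in> E" and "t v = v" using image_t_subset t_fixes_image by blast+
  then have "\<not> lt le u v" using v(2) by blast
  obtain j where j: "Suc k \<le> j" "v \<in> level P le j"
    using \<open>v \<in> E\<close> by (auto elim: levels_betweenE)
  obtain i where i: "i \<le> k" "u \<in> level P le i"
    using \<open>u \<in> U\<close> U_low by (auto elim: levels_betweenE)
  have "\<not> i + 2 \<le> j"
    using assms(1) \<open>\<not> lt le u v\<close> i(2) j(2) unfolding has_horizon_def set_less_def by blast
  with i(1) j(1) have "i = k" by linarith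
  with i(2) show "u \<in> level P le k" by simp
qed

lemma exists_level_0_below_images:
  assumes "v \<in> level T le 0" "\<forall>p\<in>E. t p = v \<longrightarrow> \<not> lt le u p"
  shows "\<exists>w. w \<in> level T le 0 \<and> (\<forall>p\<in>E. lt le u p \<longrightarrow> le w (t p))"
proof -
  obtain w where w: "w \<in> level T le 0" "\<forall>z\<in>T. z \<noteq> v \<longrightarrow> le w z"
    using other_level_0_element[OF shape_T partial_order_T assms(1)] by blast
  have "le w (t p)" if "p \<in> E" "lt le u p" for p
    using w(2) assms(2) that by blast
  with w(1) show ?thesis by blast
qed

lemma conditions_if_retraction:
  assumes "retraction P le r" "set_less le S T" "\<forall>x\<in>U. r x \<in> T" "\<forall>x\<in>E. r x = t x"
  shows "set_less le (level S le (height S le)) (level T le 0)"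
    and "\<forall>u\<in>U. \<exists>v\<in>level T le 0. \<forall>p\<in>E. t p = v \<longrightarrow> \<not> lt le u p"
proof -
  show "set_less le (level S le (height S le)) (level T le 0)"
    using assms(2) level_subset[of S le "height S le"] level_subset[of T le 0]
    unfolding set_less_def by blast
  show "\<forall>u\<in>U. \<exists>v\<in>level T le 0. \<forall>p\<in>E. t p = v \<longrightarrow> \<not> lt le u p"
  proof
    fix u assume u: "u \<in> U"
    obtain x y where "level T le 0 = {x, y}" "x \<noteq> y"
      using card_level_0_eq_2[OF shape_T] unfolding card_2_iff by blast
    then obtain v where v: "v \<in> level T le 0" "v \<noteq> r u" by blast
    have "\<not> lt le u p" if p: "p \<in> E" "t p = v" for p
    proof
      assume "lt le u p"
      then have "le (r u) v"
        using assms(1,4) u p U_subset E_subset unfolding retraction_def lt_def by (metis subsetD)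
      moreover have "r u \<in> T" using assms(3) u by blast
      ultimately show False
        using v unfolding level_def mins_def lt_def by auto
    qed
    then show "\<exists>v\<in>level T le 0. \<forall>p\<in>E. t p = v \<longrightarrow> \<not> lt le u p" using v(1) by blast
  qed
qed

lemma retraction_if_conditions:
  assumes horizon: "has_horizon P le 2"
    and top_below: "set_less le (level S le (height S le)) (level T le 0)"
    and avoid: "\<forall>u\<in>U. \<exists>v\<in>level T le 0. \<forall>p\<in>E. t p = v \<longrightarrow> \<not> lt le u p"
  shows "\<exists>r. retraction P le r \<and> r ` P = S \<union> T \<and> set_less le S T \<and>
           (\<forall>x\<in>D. r x = s x) \<and> (\<forall>x\<in>U. r x \<in> T) \<and> (\<forall>x\<in>E. r x = t x)"
proof -
  have "\<forall>u\<in>U. \<exists>w. w \<in> level T le 0 \<and> (\<forall>p\<in>E. lt le u p \<longrightarrow> le w (t p))"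
  proof
    fix u assume "u \<in> U"
    then obtain v where "v \<in> level T le 0" "\<forall>p\<in>E. t p = v \<longrightarrow> \<not> lt le u p"
      using avoid by blast
    then show "\<exists>w. w \<in> level T le 0 \<and> (\<forall>p\<in>E. lt le u p \<longrightarrow> le w (t p))"
      by (rule exists_level_0_below_images)
  qed
  then have "\<exists>w. \<forall>u\<in>U. w u \<in> level T le 0 \<and> (\<forall>p\<in>E. lt le u p \<longrightarrow> le (w u) (t p))"
    by (rule bchoice)
  then obtain w where w: "\<forall>u\<in>U. w u \<in> level T le 0 \<and> (\<forall>p\<in>E. lt le u p \<longrightarrow> le (w u) (t p))"
    by blast
  then have w_in_T: "\<forall>u\<in>U. w u \<in> T" using level_subset[of T le 0] by blast
  have S_below_T: "set_less le S T"
    using set_less_if_extreme_levels_less[OF po S_subset T_subset shape_S shape_T top_below] .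
  have "\<exists>r. retraction P le r \<and> r ` P = S \<union> T \<and>
          (\<forall>x\<in>D. r x = s x) \<and> (\<forall>x\<in>U. r x = w x) \<and> (\<forall>x\<in>E. r x = t x)"
  proof (rule retraction_glue[OF po P_partition _ lower_upper_disjoint
        retraction_s retraction_t S_below_T])
    show "\<forall>x\<in>U \<union> E. \<forall>y\<in>D \<union> U. \<not> lt le x y"
      using not_less_from_upper[OF U_subset_level_k[OF horizon avoid]] by blast
  qed (use w w_in_T in auto)
  then show ?thesis using S_below_T w_in_T by auto
qed

end

lemma finite_carrier3: "finite (carrier3 h)"
proof (rule finite_subset)
  show "carrier3 h \<subseteq> {..h} \<times> {..<3}" unfolding carrier3_def by auto
qed simp

theorem proposition6p3:
  fixes h k :: nat
    and le :: "nat \<times> nat \<Rightarrow> nat \<times> nat \<Rightarrow> bool"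
    and U :: "(nat \<times> nat) set"
    and s t :: "nat \<times> nat \<Rightarrow> nat \<times> nat"
  defines "P \<equiv> carrier3 h"
  defines "S \<equiv> s ` (levels_between P le 0 k - U)"
  defines "T \<equiv> t ` levels_between P le (Suc k) h"
  assumes "N2 h le"
    and "retractive_up_split h le k U s t"
  shows "(\<exists>r. retraction P le r \<and> r ` P = S \<union> T \<and> set_less le S T \<and>
             (\<forall>x \<in> levels_between P le 0 k - U. r x = s x) \<and>
             (\<forall>x \<in> U. r x \<in> T) \<and>
             (\<forall>x \<in> levels_between P le (Suc k) h. r x = t x))
         \<longleftrightarrow>
         (set_less le (level S le (height S le)) (level T le 0) \<and>
          (\<forall>u \<in> U. \<exists>v \<in> level T le 0.
             \<forall>p \<in> levels_between P le (Suc k) h. t p = v \<longrightarrow> \<not> lt le u p))"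
proof -
  have finite: "finite P" unfolding P_def by (rule finite_carrier3)
  have po: "partial_order_on_set P le" and height: "height P le = h"
    and "horizon P le = 2"
    using assms(4) unfolding N2_def section3_def P_def by auto
  then have horizon: "has_horizon P le 2"
    using has_horizon_horizon[OF finite po] by simp
  have split: "up_split P le h k U s t"
    using finite po height assms(5)
    unfolding up_split_def retractive_up_split_def Let_def P_def[symmetric] by simp
  show ?thesis (is "?retraction \<longleftrightarrow> ?conditions")
  proof
    assume ?retraction
    then obtain r where "retraction P le r" "set_less le S T" "\<forall>x\<in>U. r x \<in> T"
      "\<forall>x\<in>levels_between P le (Suc k) h. r x = t x"
      by blast
    then show ?conditions
      using up_split.conditions_if_retraction[OF split] unfolding S_def T_def by blast
  next
    assume ?conditions
    then show ?retraction
      using up_split.retraction_if_conditions[OF split horizon] unfolding S_def T_def by blast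
  qed
qed

end
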